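(* Let $G$ be a quiver without multiple connections with $n \geq 1$ vertices, let $\lambda_1 \leq \cdots \leq \lambda_n$ be the eigenvalues of its Kirchhoff matrix $K$ (with multiplicity), and let $d_1 \leq \cdots \leq d_n$ be its vertex degrees in increasing order. Then $\lambda_k \geq d_k - (n-k)$ for all $1 \leq k \leq n$.
   Context: A quiver $G=(V,E)$ consists of a finite vertex set $V=\{1,\dots,n\}$ and a finite list (multiset) $E$ of pairs $(v,w)\in V\times V$; repeated edges and self-loops $(v,v)$ are allowed, and orientation of edges is irrelevant. "Without multiple connections" means that for any two distinct vertices $i\neq j$ there is at most one entry of $E$ equal to $(i,j)$ or $(j,i)$; any number of loops at a vertex is still allowed. The adjacency matrix $A$ is the symmetric $n\times n$ matrix with zero diagonal whose entry $A_{ij}$ ($i\neq j$) is the number of entries of $E$ equal to $(i,j)$ or $(j,i)$. The degree $d(i)$ of vertex $i$ is the number of entries $(v,w)$ of $E$ (counted with multiplicity) with $v=i$ or $w=i$; a loop at $i$ contributes $1$. $B$ is the diagonal degree matrix and the Kirchhoff matrix is $K=B-A$. *)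

theory Defs
  imports "Jordan_Normal_Form.Char_Poly"
begin

text \<open>A quiver on vertex set {1..n} is given by a finite list (multiset) E of vertex pairs.\<close>

definition quiver :: "nat \<Rightarrow> (nat \<times> nat) list \<Rightarrow> bool" where
  "quiver n E \<longleftrightarrow> (\<forall>(v,w) \<in> set E. v \<in> {1..n} \<and> w \<in> {1..n})"

definition edge_count :: "(nat \<times> nat) list \<Rightarrow> nat \<Rightarrow> nat \<Rightarrow> nat" where
  "edge_count E i j = length (filter (\<lambda>e. e = (i,j) \<or> e = (j,i)) E)"

definition no_multiple_connections :: "nat \<Rightarrow> (nat \<times> nat) list \<Rightarrow> bool" where
  "no_multiple_connections n E \<longleftrightarrow>
     (\<forall>i \<in> {1..n}. \<forall>j \<in> {1..n}. i \<noteq> j \<longrightarrow> edge_count E i j \<le> 1)"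

text \<open>Degree: number of entries (v,w) with v = i or w = i; a loop counts once.\<close>
definition degree :: "(nat \<times> nat) list \<Rightarrow> nat \<Rightarrow> nat" where
  "degree E i = length (filter (\<lambda>(v,w). v = i \<or> w = i) E)"

text \<open>Adjacency matrix (zero diagonal), degree matrix, Kirchhoff matrix K = B - A.
  Matrix index a (0-based) corresponds to vertex a+1.\<close>
definition adjacency_matrix :: "nat \<Rightarrow> (nat \<times> nat) list \<Rightarrow> real mat" where
  "adjacency_matrix n E = mat n n (\<lambda>(a,b). if a = b then 0 else real (edge_count E (a+1) (b+1)))"

definition degree_matrix :: "nat \<Rightarrow> (nat \<times> nat) list \<Rightarrow> real mat" where
  "degree_matrix n E = mat n n (\<lambda>(a,b). if a = b then real (degree E (a+1)) else 0)"

definition kirchhoff_matrix :: "nat \<Rightarrow> (nat \<times> nat) list \<Rightarrow> real mat" where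
  "kirchhoff_matrix n E = degree_matrix n E - adjacency_matrix n E"

definition eigenvalue_list :: "real mat \<Rightarrow> real list \<Rightarrow> bool" where
  "eigenvalue_list K ls \<longleftrightarrow> sorted ls \<and> char_poly K = (\<Prod>a \<leftarrow> ls. [:- a, 1:])"

definition sorted_degrees :: "nat \<Rightarrow> (nat \<times> nat) list \<Rightarrow> nat list" where
  "sorted_degrees n E = sort (map (degree E) [1..<n+1])"

end

theory Submission
  imports Defs "Jordan_Normal_Form.Schur_Decomposition"
begin

text \<open>
  A real matrix whose characteristic polynomial splits has a Schur form with respect to an
  orthogonal change of basis (deflate by an eigenvector completed to an orthonormal basis by
  Gram-Schmidt); for the symmetric Kirchhoff matrix this form is diagonal. This gives the
  lower half of Courant-Fischer: if \<open>x\<^sup>T K x \<ge> c \<parallel>x\<parallel>\<^sup>2\<close> for all \<open>x\<close> supported on a set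
  \<open>T\<close> of \<open>n - k + 1\<close> coordinates, then \<open>\<lambda>\<^sub>k \<ge> c\<close>, because these vectors meet the span of
  the first \<open>k\<close> eigenvectors. Take for \<open>T\<close> the vertices of degree at least \<open>d\<^sub>k\<close>. For \<open>x\<close>
  supported on \<open>T\<close>, \<open>x\<^sup>T K x = \<Sum>\<^sub>i d(i) x\<^sub>i\<^sup>2 - \<Sum>\<^sub>i\<^sub>\<noteq>\<^sub>j A\<^sub>i\<^sub>j x\<^sub>i x\<^sub>j\<close>; the first sum is at least
  \<open>d\<^sub>k \<parallel>x\<parallel>\<^sup>2\<close>, and as \<open>A\<^sub>i\<^sub>j \<le> 1\<close> and \<open>2 x\<^sub>i x\<^sub>j \<le> x\<^sub>i\<^sup>2 + x\<^sub>j\<^sup>2\<close> the second is at most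
  \<open>(|T| - 1) \<parallel>x\<parallel>\<^sup>2 = (n - k) \<parallel>x\<parallel>\<^sup>2\<close>.
\<close>

lemma normalized_corthogonal_orthonormal:
  fixes ws :: "real vec list"
  assumes ws: "set ws \<subseteq> carrier_vec n" "corthogonal ws"
    and i: "i < length ws" and j: "j < length ws"
  defines "us \<equiv> map (\<lambda>w. (1 / sqrt (w \<bullet> w)) \<cdot>\<^sub>v w) ws"
  shows "us ! i \<bullet> us ! j = (if i = j then 1 else 0)"
proof -
  have car: "ws ! i \<in> carrier_vec n" "ws ! j \<in> carrier_vec n" using ws i j by auto
  have orth: "ws ! i \<bullet> ws ! j = 0 \<longleftrightarrow> i \<noteq> j"
    using ws(2) i j unfolding corthogonal_def by auto
  have "ws ! i \<bullet> ws ! i \<ge> 0" unfolding scalar_prod_def by (auto intro: sum_nonneg)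
  with orth have pos: "i = j \<Longrightarrow> ws ! i \<bullet> ws ! i > 0" by auto
  have "us ! i \<bullet> us ! j = 1 / sqrt (ws ! i \<bullet> ws ! i) * (1 / sqrt (ws ! j \<bullet> ws ! j)) * (ws ! i \<bullet> ws ! j)"
    unfolding us_def using i j car by simp
  then show ?thesis using orth pos by (auto simp: real_sqrt_mult[symmetric])
qed

lemma orthonormal_basis_extension:
  fixes v :: "real vec"
  assumes v: "v \<in> carrier_vec n" and v0: "v \<noteq> 0\<^sub>v n"
  shows "\<exists>W \<in> carrier_mat n n. transpose_mat W * W = 1\<^sub>m n \<and> col W 0 = (1 / sqrt (v \<bullet> v)) \<cdot>\<^sub>v v"
proof -
  interpret cof_vec_space n "TYPE(real)" .
  have n: "n \<noteq> 0" using v v0 by auto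
  define b where "b = basis_completion v"
  from basis_completion[OF v v0, folded b_def]
  have "distinct b" "\<not> lin_dep (set b)" "set b \<subseteq> carrier_vec n" "hd b = v" "length b = n"
    by auto
  moreover from this n obtain vs where bv: "b = v # vs" by (cases b) auto
  define ws where "ws = gram_schmidt n b"
  ultimately have ws: "set ws \<subseteq> carrier_vec n" "corthogonal ws" "length ws = n"
    using gram_schmidt_result[OF _ _ _ refl, of b, folded ws_def] by auto
  have "ws ! 0 = v"
    using gram_schmidt_hd[OF v, of vs, folded bv ws_def] n ws(3) by (cases ws) auto
  define us where "us = map (\<lambda>w. (1 / sqrt (w \<bullet> w)) \<cdot>\<^sub>v w) ws"
  have us: "length us = n" "\<And>i. i < n \<Longrightarrow> us ! i \<in> carrier_vec n" "us ! 0 = (1 / sqrt (v \<bullet> v)) \<cdot>\<^sub>v v"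
    using ws \<open>ws ! 0 = v\<close> n unfolding us_def by auto
  define W where "W = mat_of_cols n us"
  have W: "W \<in> carrier_mat n n" and colW: "\<And>j. j < n \<Longrightarrow> col W j = us ! j"
    unfolding W_def using us by auto
  have "transpose_mat W * W = 1\<^sub>m n"
    using W colW normalized_corthogonal_orthonormal[OF ws(1,2)] ws(3) by (intro eq_matI) (auto simp: us_def)
  with W colW[of 0] us(3) n show ?thesis by auto
qed

lemma orthogonal_right_inverse:
  fixes W :: "'a :: field mat"
  assumes "W \<in> carrier_mat n n" "transpose_mat W * W = 1\<^sub>m n"
  shows "W * transpose_mat W = 1\<^sub>m n"
  using mat_mult_left_right_inverse[of "transpose_mat W" n W] assms by auto

lemma orthogonal_conj_first_col:
  fixes A :: "'a :: field mat"
  assumes A: "A \<in> carrier_mat n n" and W: "W \<in> carrier_mat n n"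
    and WTW: "transpose_mat W * W = 1\<^sub>m n" and n: "0 < n"
    and ev: "A *\<^sub>v col W 0 = e \<cdot>\<^sub>v col W 0"
  shows "col (transpose_mat W * A * W) 0 = e \<cdot>\<^sub>v unit_vec n 0"
proof -
  have WT: "transpose_mat W \<in> carrier_mat n n" using W by auto
  have "col (transpose_mat W * A * W) 0 = (transpose_mat W * A) *\<^sub>v col W 0"
    using W WT A n by (intro col_mult2) auto
  also have "\<dots> = transpose_mat W *\<^sub>v (A *\<^sub>v col W 0)"
    using W WT A n by (intro assoc_mult_mat_vec) auto
  also have "\<dots> = e \<cdot>\<^sub>v (transpose_mat W *\<^sub>v col W 0)"
    unfolding ev using W by (intro mult_mat_vec[OF WT]) auto
  also have "transpose_mat W *\<^sub>v col W 0 = col (transpose_mat W * W) 0"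
    using W WT n by (intro col_mult2[symmetric]) auto
  finally show ?thesis using WTW n by simp
qed

lemma orthogonal_deflation:
  fixes A :: "real mat"
  assumes A: "A \<in> carrier_mat n n" and ev: "eigenvalue A e"
  obtains W A2 A3 where "W \<in> carrier_mat n n" "transpose_mat W * W = 1\<^sub>m n"
    "A2 \<in> carrier_mat 1 (n - 1)" "A3 \<in> carrier_mat (n - 1) (n - 1)"
    "transpose_mat W * A * W = four_block_mat (mat 1 1 (\<lambda>_. e)) A2 (0\<^sub>m (n - 1) 1) A3"
proof -
  obtain v where v: "v \<in> carrier_vec n" "v \<noteq> 0\<^sub>v n" "A *\<^sub>v v = e \<cdot>\<^sub>v v"
    using ev A unfolding eigenvalue_def eigenvector_def by auto
  then have n: "0 < n" by (cases n) auto
  obtain W where W: "W \<in> carrier_mat n n" "transpose_mat W * W = 1\<^sub>m n"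
    and W0: "col W 0 = (1 / sqrt (v \<bullet> v)) \<cdot>\<^sub>v v"
    using orthonormal_basis_extension[OF v(1,2)] by blast
  have "A *\<^sub>v col W 0 = e \<cdot>\<^sub>v col W 0"
    unfolding W0 using A v by (simp add: mult_mat_vec smult_smult_assoc mult.commute)
  from orthogonal_conj_first_col[OF A W n this]
  have col0: "col (transpose_mat W * A * W) 0 = e \<cdot>\<^sub>v unit_vec n 0" .
  define A' where "A' = transpose_mat W * A * W"
  have A': "A' \<in> carrier_mat (1 + (n - 1)) (1 + (n - 1))" unfolding A'_def using A W n by auto
  obtain A1 A2 A0 A3 where split: "split_block A' 1 1 = (A1, A2, A0, A3)"
    by (cases "split_block A' 1 1") auto
  from split_block[OF split, of "n - 1" "n - 1"] A'
  have "A2 \<in> carrier_mat 1 (n - 1)" "A3 \<in> carrier_mat (n - 1) (n - 1)"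
    "A' = four_block_mat A1 A2 A0 A3" by auto
  moreover have first_col: "A' $$ (i, 0) = (if i = 0 then e else 0)" if "i < n" for i
    using arg_cong[OF col0[folded A'_def], of "\<lambda>v. v $ i"] A' that by auto
  have "A1 = mat 1 1 (\<lambda>_. e)" "A0 = 0\<^sub>m (n - 1) 1"
    using split A' n unfolding split_block_def Let_def by (auto simp: first_col)
  ultimately show ?thesis using that W unfolding A'_def by auto
qed

lemma orthogonal_block_extension:
  fixes P :: "'a :: comm_ring_1 mat"
  assumes P: "P \<in> carrier_mat m m" and PTP: "transpose_mat P * P = 1\<^sub>m m"
  defines "Q \<equiv> four_block_mat (1\<^sub>m 1) (0\<^sub>m 1 m) (0\<^sub>m m 1) P"
  shows "Q \<in> carrier_mat (1 + m) (1 + m)" and "transpose_mat Q * Q = 1\<^sub>m (1 + m)"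
    and "A1 \<in> carrier_mat 1 1 \<Longrightarrow> A2 \<in> carrier_mat 1 m \<Longrightarrow> A3 \<in> carrier_mat m m \<Longrightarrow>
      transpose_mat Q * four_block_mat A1 A2 (0\<^sub>m m 1) A3 * Q
        = four_block_mat A1 (A2 * P) (0\<^sub>m m 1) (transpose_mat P * A3 * P)"
proof -
  have QT: "transpose_mat Q = four_block_mat (1\<^sub>m 1) (0\<^sub>m 1 m) (0\<^sub>m m 1) (transpose_mat P)"
    unfolding Q_def using P by (simp add: transpose_four_block_mat[of _ 1 1 _ m _ m])
  show "Q \<in> carrier_mat (1 + m) (1 + m)" unfolding Q_def using P by auto
  show "transpose_mat Q * Q = 1\<^sub>m (1 + m)" unfolding QT unfolding Q_def
    using P PTP by (subst mult_four_block_mat[of _ 1 1 _ m _ m _ _ 1 _ m]) auto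
  assume "A1 \<in> carrier_mat 1 1" "A2 \<in> carrier_mat 1 m" "A3 \<in> carrier_mat m m"
  then show "transpose_mat Q * four_block_mat A1 A2 (0\<^sub>m m 1) A3 * Q
      = four_block_mat A1 (A2 * P) (0\<^sub>m m 1) (transpose_mat P * A3 * P)"
    unfolding QT unfolding Q_def using P
    by (subst mult_four_block_mat[of _ 1 1 _ m _ m _ _ 1 _ m], auto,
        subst mult_four_block_mat[of _ 1 1 _ m _ m _ _ 1 _ m], auto)
qed

lemma orthogonal_block_triangularization:
  fixes A :: "'a :: comm_ring_1 mat"
  assumes A: "A \<in> carrier_mat (1 + m) (1 + m)"
    and W: "W \<in> carrier_mat (1 + m) (1 + m)" "transpose_mat W * W = 1\<^sub>m (1 + m)"
    and A2: "A2 \<in> carrier_mat 1 m" and A3: "A3 \<in> carrier_mat m m"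
    and WAW: "transpose_mat W * A * W = four_block_mat (mat 1 1 (\<lambda>_. e)) A2 (0\<^sub>m m 1) A3"
    and P': "P' \<in> carrier_mat m m" "transpose_mat P' * P' = 1\<^sub>m m"
    and ut: "upper_triangular (transpose_mat P' * A3 * P')"
  shows "\<exists>P \<in> carrier_mat (1 + m) (1 + m). transpose_mat P * P = 1\<^sub>m (1 + m) \<and>
    upper_triangular (transpose_mat P * A * P) \<and>
    diag_mat (transpose_mat P * A * P) = e # diag_mat (transpose_mat P' * A3 * P')"
proof -
  define Q where "Q = four_block_mat (1\<^sub>m 1) (0\<^sub>m 1 m) (0\<^sub>m m 1) P'"
  note Q = orthogonal_block_extension[OF P', folded Q_def]
  define P where "P = W * Q"
  have P: "P \<in> carrier_mat (1 + m) (1 + m)" unfolding P_def using W Q by auto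
  have PT: "transpose_mat P = transpose_mat Q * transpose_mat W"
    unfolding P_def using W Q by (simp add: transpose_mult)
  have "transpose_mat P * P = transpose_mat Q * (transpose_mat W * W) * Q"
    unfolding PT unfolding P_def using W(1) Q(1) by (simp add: assoc_mult_mat[of _ "Suc m" "Suc m" _ "Suc m" _ "Suc m"])
  also have "\<dots> = 1\<^sub>m (1 + m)" unfolding W(2) using Q by simp
  finally have PTP: "transpose_mat P * P = 1\<^sub>m (1 + m)" .
  have "transpose_mat P * A * P = transpose_mat Q * (transpose_mat W * A * W) * Q"
    unfolding PT unfolding P_def using W(1) Q(1) A by (simp add: assoc_mult_mat[of _ "Suc m" "Suc m" _ "Suc m" _ "Suc m"])
  then have PAP: "transpose_mat P * A * P
      = four_block_mat (mat 1 1 (\<lambda>_. e)) (A2 * P') (0\<^sub>m m 1) (transpose_mat P' * A3 * P')"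
    unfolding WAW using Q(3) A2 A3 by simp
  have A1: "mat 1 1 (\<lambda>_. e) \<in> carrier_mat 1 1" "upper_triangular (mat 1 1 (\<lambda>_. e))" by auto
  have B: "transpose_mat P' * A3 * P' \<in> carrier_mat m m" using P' A3 by auto
  have "upper_triangular (transpose_mat P * A * P)"
    unfolding PAP using upper_triangular_four_block[OF A1(1) B A1(2) ut] .
  moreover have "diag_mat (transpose_mat P * A * P) = e # diag_mat (transpose_mat P' * A3 * P')"
    unfolding PAP diag_four_block_mat[OF A1(1) B] by (simp add: diag_mat_def)
  ultimately show ?thesis using P PTP by blast
qed

lemma real_orthogonal_schur:
  fixes A :: "real mat"
  assumes "A \<in> carrier_mat n n" and "char_poly A = (\<Prod>e\<leftarrow>es. [:- e, 1:])"
  shows "\<exists>P \<in> carrier_mat n n. transpose_mat P * P = 1\<^sub>m n \<and>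
     upper_triangular (transpose_mat P * A * P) \<and> diag_mat (transpose_mat P * A * P) = es"
  using assms
proof (induction es arbitrary: n A)
  case Nil
  then have "n = 0" using degree_monic_char_poly[of A n] by auto
  then show ?case by (intro bexI[of _ "1\<^sub>m 0"]) (auto simp: diag_mat_def upper_triangular_def)
next
  case (Cons e es n A)
  have A: "A \<in> carrier_mat n n" by fact
  have cp: "char_poly A = [:- e, 1:] * (\<Prod>e\<leftarrow>es. [:- e, 1:])" using Cons(3) by simp
  then have "eigenvalue A e" by (simp add: eigenvalue_root_char_poly[OF A])
  from orthogonal_deflation[OF A this] obtain W A2 A3
    where W: "W \<in> carrier_mat n n" "transpose_mat W * W = 1\<^sub>m n"
      and A2: "A2 \<in> carrier_mat 1 (n - 1)" and A3: "A3 \<in> carrier_mat (n - 1) (n - 1)"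
      and WAW: "transpose_mat W * A * W = four_block_mat (mat 1 1 (\<lambda>_. e)) A2 (0\<^sub>m (n - 1) 1) A3" .
  have n: "1 + (n - 1) = n" using degree_monic_char_poly[OF A] cp
    by (cases n) (auto simp: degree_linear_factors[of uminus "e # es", simplified])
  have "similar_mat (transpose_mat W * A * W) A"
    unfolding similar_mat_def
  proof (intro exI)
    show "similar_mat_wit (transpose_mat W * A * W) A (transpose_mat W) W"
      using W A orthogonal_right_inverse[OF W] by (intro similar_mat_witI[of _ _ n]) auto
  qed
  then have "char_poly (transpose_mat W * A * W) = char_poly A" by (rule char_poly_similar)
  also have "char_poly (transpose_mat W * A * W) = [:- e, 1:] * char_poly A3"
    unfolding WAW using A2 A3
    by (subst char_poly_four_block_zeros_col) (auto simp: char_poly_defs det_def sign_def)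
  finally have "char_poly A3 = (\<Prod>e\<leftarrow>es. [:- e, 1:])" unfolding cp
    by (metis mult_cancel_left pCons_eq_0_iff zero_neq_one)
  from Cons.IH[OF A3 this] obtain P' where "P' \<in> carrier_mat (n - 1) (n - 1)"
    "transpose_mat P' * P' = 1\<^sub>m (n - 1)" "upper_triangular (transpose_mat P' * A3 * P')"
    "diag_mat (transpose_mat P' * A3 * P') = es" by blast
  with orthogonal_block_triangularization[of A "n - 1" W A2 A3 e P'] A W A2 A3 WAW
  show ?case unfolding n by metis
qed

lemma symmetric_orthogonal_diagonalization:
  fixes K :: "real mat"
  assumes K: "K \<in> carrier_mat n n" and sym: "transpose_mat K = K"
    and cp: "char_poly K = (\<Prod>a\<leftarrow>lam. [:- a, 1:])"
  obtains P where "P \<in> carrier_mat n n" "transpose_mat P * P = 1\<^sub>m n"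
    "transpose_mat P * K * P = mat n n (\<lambda>(i, j). if i = j then lam ! i else 0)"
proof -
  obtain P where P: "P \<in> carrier_mat n n" "transpose_mat P * P = 1\<^sub>m n"
    and ut: "upper_triangular (transpose_mat P * K * P)"
    and dg: "diag_mat (transpose_mat P * K * P) = lam"
    using real_orthogonal_schur[OF K cp] by blast
  define D where "D = transpose_mat P * K * P"
  have D: "D \<in> carrier_mat n n" unfolding D_def using P K by auto
  have "transpose_mat D = D"
    unfolding D_def using P K by (simp add: transpose_mult[of _ n n _ n] sym assoc_mult_mat[of _ n n _ n _ n])
  then have "D $$ (i, j) = D $$ (j, i)" if "i < n" "j < n" for i j
    using that D by (metis carrier_matD index_transpose_mat(1))
  moreover have "D $$ (i, j) = 0" if "j < i" "i < n" for i j
    using ut that D unfolding D_def[symmetric] upper_triangular_def by auto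
  moreover have "D $$ (i, i) = lam ! i" if "i < n" for i
    using dg that D unfolding D_def[symmetric] diag_mat_def by auto
  ultimately have "D = mat n n (\<lambda>(i, j). if i = j then lam ! i else 0)"
    using D by (intro eq_matI) (auto, metis linorder_neqE_nat)
  with P that show ?thesis unfolding D_def by blast
qed

lemma quadratic_form_conj:
  fixes M :: "'a :: comm_semiring_0 mat"
  assumes P: "P \<in> carrier_mat n m" and M: "M \<in> carrier_mat n n" and y: "y \<in> carrier_vec m"
  shows "(P *\<^sub>v y) \<bullet> (M *\<^sub>v (P *\<^sub>v y)) = y \<bullet> ((transpose_mat P * M * P) *\<^sub>v y)"
proof -
  have "(transpose_mat P * M * P) *\<^sub>v y = (transpose_mat P * M) *\<^sub>v (P *\<^sub>v y)"
    using P M y by (intro assoc_mult_mat_vec) auto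
  also have "\<dots> = transpose_mat P *\<^sub>v (M *\<^sub>v (P *\<^sub>v y))"
    using P M y by (intro assoc_mult_mat_vec) auto
  finally have "y \<bullet> ((transpose_mat P * M * P) *\<^sub>v y) = (transpose_mat P *\<^sub>v (M *\<^sub>v (P *\<^sub>v y))) \<bullet> y"
    using P M y by (metis comm_scalar_prod mult_mat_vec_carrier transpose_carrier_mat)
  also have "\<dots> = (M *\<^sub>v (P *\<^sub>v y)) \<bullet> (P *\<^sub>v y)"
    using P M y by (intro transpose_vec_mult_scalar) auto
  also have "\<dots> = (P *\<^sub>v y) \<bullet> (M *\<^sub>v (P *\<^sub>v y))"
    using P M y by (intro comm_scalar_prod[of _ n]) auto
  finally show ?thesis by simp
qed

lemma diagonal_quadratic_form_le:
  fixes lam :: "real list"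
  assumes sorted: "sorted lam" and len: "length lam = n" and k: "k < n"
    and y: "y \<in> carrier_vec n" and supp: "\<And>i. k < i \<Longrightarrow> i < n \<Longrightarrow> y $ i = 0"
  shows "y \<bullet> (mat n n (\<lambda>(i, j). if i = j then lam ! i else 0) *\<^sub>v y) \<le> lam ! k * (y \<bullet> y)"
proof -
  have "mat n n (\<lambda>(i, j). if i = j then lam ! i else 0) *\<^sub>v y = vec n (\<lambda>i. lam ! i * y $ i)"
    using y by (intro eq_vecI, simp add: scalar_prod_def if_distrib[of "\<lambda>a. a * _"] cong: if_cong, simp)
  then have "y \<bullet> (mat n n (\<lambda>(i, j). if i = j then lam ! i else 0) *\<^sub>v y) = (\<Sum>i<n. lam ! i * (y $ i * y $ i))"
    using y by (simp add: scalar_prod_def lessThan_atLeast0 ac_simps)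
  also have "\<dots> \<le> (\<Sum>i<n. lam ! k * (y $ i * y $ i))"
  proof (rule sum_mono)
    fix i assume "i \<in> {..<n}"
    then show "lam ! i * (y $ i * y $ i) \<le> lam ! k * (y $ i * y $ i)"
      using sorted len k supp[of i] by (cases "i \<le> k") (auto intro: mult_right_mono sorted_nth_mono)
  qed
  also have "\<dots> = lam ! k * (y \<bullet> y)"
    using y by (simp add: scalar_prod_def lessThan_atLeast0 sum_distrib_left)
  finally show ?thesis .
qed

lemma exists_vec_vanishing_on_rows:
  fixes P :: "'a :: field mat"
  assumes P: "P \<in> carrier_mat n n" and C: "C \<subseteq> {0..<n}" "card C = k" and k: "k < n"
  obtains y where "y \<in> carrier_vec n" "y \<noteq> 0\<^sub>v n" "\<And>i. k < i \<Longrightarrow> i < n \<Longrightarrow> y $ i = 0"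
    "\<And>j. j \<in> C \<Longrightarrow> (P *\<^sub>v y) $ j = 0"
proof -
  \<comment> \<open>The rows of \<open>P\<close> indexed by \<open>C\<close>, cut to the first \<open>k + 1\<close> columns and padded by a zero
    row, form a singular square matrix; a kernel vector of it, extended by zeros, is \<open>y\<close>.\<close>
  obtain f where f: "bij_betw f {0..<k} C"
    using ex_bij_betw_nat_finite[of C] C finite_subset by blast
  define N where "N = mat\<^sub>r (Suc k) (Suc k)
    (\<lambda>r. if r = k then 0\<^sub>v (Suc k) else vec (Suc k) (\<lambda>i. P $$ (f r, i)))"
  have N: "N \<in> carrier_mat (Suc k) (Suc k)" unfolding N_def by auto
  have "det N = 0" unfolding N_def by (intro det_row_0) auto
  then obtain z where z: "z \<in> carrier_vec (Suc k)" "z \<noteq> 0\<^sub>v (Suc k)" "N *\<^sub>v z = 0\<^sub>v (Suc k)"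
    using det_0_iff_vec_prod_zero_field[OF N] by auto
  define y where "y = vec n (\<lambda>i. if i \<le> k then z $ i else 0)"
  show thesis
  proof (rule that)
    show y: "y \<in> carrier_vec n" unfolding y_def by auto
    obtain i where "i \<le> k" "z $ i \<noteq> 0" using z(1,2) by (metis carrier_vecD eq_vecI index_zero_vec less_Suc_eq_le)
    then show "y \<noteq> 0\<^sub>v n" unfolding y_def using k by (auto dest!: arg_cong[of _ _ "\<lambda>v. v $ i"])
    show "y $ i = 0" if "k < i" "i < n" for i unfolding y_def using that by auto
    fix j assume "j \<in> C"
    then obtain r where r: "r < k" "f r = j" using f unfolding bij_betw_def by auto
    have "j < n" using \<open>j \<in> C\<close> C by auto
    then have "(P *\<^sub>v y) $ j = (\<Sum>i<n. P $$ (j, i) * y $ i)"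
      using P y by (simp add: scalar_prod_def lessThan_atLeast0)
    also have "\<dots> = (\<Sum>i<Suc k. P $$ (j, i) * z $ i)"
      unfolding y_def using k by (intro sum.mono_neutral_cong_right) auto
    also have "\<dots> = (N *\<^sub>v z) $ r"
      unfolding N_def using r z by (simp add: scalar_prod_def lessThan_atLeast0)
    finally show "(P *\<^sub>v y) $ j = 0" using z r by simp
  qed
qed

lemma courant_fischer_lower_bound:
  fixes K :: "real mat"
  assumes K: "K \<in> carrier_mat n n" "transpose_mat K = K"
    and lam: "sorted lam" "char_poly K = (\<Prod>a\<leftarrow>lam. [:- a, 1:])"
    and k: "k < n" and T: "T \<subseteq> {0..<n}" "card T = n - k"
    and bound: "\<And>x. x \<in> carrier_vec n \<Longrightarrow> (\<And>i. i < n \<Longrightarrow> i \<notin> T \<Longrightarrow> x $ i = 0) \<Longrightarrow>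
      c * (x \<bullet> x) \<le> x \<bullet> (K *\<^sub>v x)"
  shows "c \<le> lam ! k"
proof -
  have len: "length lam = n"
    using degree_monic_char_poly[OF K(1)] lam(2) degree_linear_factors[of uminus lam] by simp
  obtain P where P: "P \<in> carrier_mat n n" "transpose_mat P * P = 1\<^sub>m n"
    and D: "transpose_mat P * K * P = mat n n (\<lambda>(i, j). if i = j then lam ! i else 0)"
    using symmetric_orthogonal_diagonalization[OF K lam(2)] .
  have "{0..<n} - T \<subseteq> {0..<n}" "card ({0..<n} - T) = k"
    using T k by (auto simp: card_Diff_subset finite_subset)
  from exists_vec_vanishing_on_rows[OF P(1) this k] obtain y where y: "y \<in> carrier_vec n"
    "y \<noteq> 0\<^sub>v n" "\<And>i. k < i \<Longrightarrow> i < n \<Longrightarrow> y $ i = 0" "\<And>j. j \<in> {0..<n} - T \<Longrightarrow> (P *\<^sub>v y) $ j = 0"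
    by blast
  have "(P *\<^sub>v y) \<bullet> (P *\<^sub>v y) = y \<bullet> y"
    using quadratic_form_conj[of P n n "1\<^sub>m n" y] P y by simp
  moreover have "(P *\<^sub>v y) \<bullet> (K *\<^sub>v (P *\<^sub>v y)) \<le> lam ! k * (y \<bullet> y)"
    unfolding quadratic_form_conj[OF P(1) K(1) y(1)] D
    using diagonal_quadratic_form_le[OF lam(1) len k y(1,3)] .
  moreover have "c * ((P *\<^sub>v y) \<bullet> (P *\<^sub>v y)) \<le> (P *\<^sub>v y) \<bullet> (K *\<^sub>v (P *\<^sub>v y))"
    using P y by (intro bound) auto
  moreover have "y \<bullet> y > 0" using conjugate_square_greater_0_vec[OF y(1)] y(2) by simp
  ultimately show ?thesis by (metis mult_le_cancel_right_pos order_trans)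
qed

lemma quadratic_form_supported:
  fixes A :: "'a :: comm_semiring_0 mat"
  assumes A: "A \<in> carrier_mat n n" and x: "x \<in> carrier_vec n" and T: "T \<subseteq> {0..<n}"
    and supp: "\<And>i. i < n \<Longrightarrow> i \<notin> T \<Longrightarrow> x $ i = 0"
  shows "x \<bullet> (A *\<^sub>v x) = (\<Sum>i\<in>T. \<Sum>j\<in>T. x $ i * A $$ (i, j) * x $ j)"
proof -
  have "x \<bullet> (A *\<^sub>v x) = (\<Sum>i\<in>{0..<n}. \<Sum>j\<in>{0..<n}. x $ i * A $$ (i, j) * x $ j)"
    using A x by (simp add: scalar_prod_def sum_distrib_left mult.assoc)
  also have "\<dots> = (\<Sum>i\<in>T. \<Sum>j\<in>{0..<n}. x $ i * A $$ (i, j) * x $ j)"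
    using T supp by (intro sum.mono_neutral_right) auto
  also have "\<dots> = (\<Sum>i\<in>T. \<Sum>j\<in>T. x $ i * A $$ (i, j) * x $ j)"
    using T supp by (intro sum.cong refl sum.mono_neutral_right) auto
  finally show ?thesis .
qed

lemma off_diagonal_sum_le:
  fixes x :: "nat \<Rightarrow> real"
  assumes T: "finite T" and c: "\<And>i j. i \<in> T \<Longrightarrow> j \<in> T \<Longrightarrow> i \<noteq> j \<Longrightarrow> 0 \<le> c i j \<and> c i j \<le> 1"
  shows "(\<Sum>i\<in>T. \<Sum>j\<in>T. if i = j then 0 else c i j * x i * x j) \<le> real (card T - 1) * (\<Sum>i\<in>T. x i ^ 2)"
proof -
  have row: "(\<Sum>i\<in>T. \<Sum>j\<in>T. if i = j then 0 else x i ^ 2) = real (card T - 1) * (\<Sum>i\<in>T. x i ^ 2)"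
  proof -
    have "(\<Sum>j\<in>T. if i = j then 0 else x i ^ 2) = real (card T - 1) * x i ^ 2" if "i \<in> T" for i
    proof -
      have "(\<Sum>j\<in>T. if i = j then 0 else x i ^ 2) = (\<Sum>j\<in>T - {i}. x i ^ 2)"
        using T by (intro sum.mono_neutral_cong_right) auto
      then show ?thesis using T that by simp
    qed
    then show ?thesis by (simp add: sum_distrib_left)
  qed
  have col: "(\<Sum>i\<in>T. \<Sum>j\<in>T. if i = j then 0 else x j ^ 2) = (\<Sum>i\<in>T. \<Sum>j\<in>T. if i = j then 0 else x i ^ 2)"
    by (subst sum.swap) (intro sum.cong refl, auto)
  have "(\<Sum>i\<in>T. \<Sum>j\<in>T. if i = j then 0 else c i j * x i * x j)
      \<le> (\<Sum>i\<in>T. \<Sum>j\<in>T. ((if i = j then 0 else x i ^ 2) + (if i = j then 0 else x j ^ 2)) / 2)"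
  proof (intro sum_mono)
    fix i j assume ij: "i \<in> T" "j \<in> T"
    show "(if i = j then 0 else c i j * x i * x j)
        \<le> ((if i = j then 0 else x i ^ 2) + (if i = j then 0 else x j ^ 2)) / 2"
    proof (cases "i = j")
      case False
      have "c i j * (x i * x j) \<le> \<bar>x i * x j\<bar>"
        using c[OF ij False] by (metis abs_ge_self abs_mult abs_of_nonneg mult_left_le_one_le abs_ge_zero order_trans)
      moreover have "\<bar>x i * x j\<bar> \<le> (x i ^ 2 + x j ^ 2) / 2"
        using sum_squares_bound[of "\<bar>x i\<bar>" "\<bar>x j\<bar>"] by (simp add: abs_mult)
      ultimately show ?thesis using False by (simp add: mult.assoc)
    qed simp
  qed
  also have "\<dots> = real (card T - 1) * (\<Sum>i\<in>T. x i ^ 2)"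
    unfolding add_divide_distrib sum.distrib sum_divide_distrib[symmetric] col row by simp
  finally show ?thesis .
qed

lemma edge_count_sym: "edge_count E i j = edge_count E j i"
  unfolding edge_count_def by (metis disj_commute)

lemma kirchhoff_matrix_carrier: "kirchhoff_matrix n E \<in> carrier_mat n n"
  unfolding kirchhoff_matrix_def degree_matrix_def adjacency_matrix_def by auto

lemma kirchhoff_matrix_index:
  assumes "i < n" "j < n"
  shows "kirchhoff_matrix n E $$ (i, j) =
    (if i = j then real (degree E (i + 1)) else - real (edge_count E (i + 1) (j + 1)))"
  using assms unfolding kirchhoff_matrix_def degree_matrix_def adjacency_matrix_def by auto

lemma transpose_kirchhoff_matrix: "transpose_mat (kirchhoff_matrix n E) = kirchhoff_matrix n E"
  using kirchhoff_matrix_carrier[of n E]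
  by (intro eq_matI) (auto simp: kirchhoff_matrix_index edge_count_sym)

lemma kirchhoff_quadratic_form_ge:
  assumes nm: "no_multiple_connections n E" and T: "T \<subseteq> {0..<n}"
    and deg: "\<And>i. i \<in> T \<Longrightarrow> d \<le> degree E (i + 1)"
    and x: "x \<in> carrier_vec n" and supp: "\<And>i. i < n \<Longrightarrow> i \<notin> T \<Longrightarrow> x $ i = 0"
  shows "(real d - real (card T - 1)) * (x \<bullet> x) \<le> x \<bullet> (kirchhoff_matrix n E *\<^sub>v x)"
proof -
  define c where "c i j = real (edge_count E (i + 1) (j + 1))" for i j
  have fin: "finite T" using T finite_subset by blast
  have xx: "x \<bullet> x = (\<Sum>i\<in>T. x $ i ^ 2)"
    using x T supp by (auto simp: scalar_prod_def power2_eq_square intro!: sum.mono_neutral_right)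
  have "x \<bullet> (kirchhoff_matrix n E *\<^sub>v x)
      = (\<Sum>i\<in>T. \<Sum>j\<in>T. x $ i * kirchhoff_matrix n E $$ (i, j) * x $ j)"
    using quadratic_form_supported[OF kirchhoff_matrix_carrier x T] supp by blast
  also have "\<dots> = (\<Sum>i\<in>T. \<Sum>j\<in>T.
      (if i = j then real (degree E (i + 1)) * x $ i ^ 2 else 0) - (if i = j then 0 else c i j * x $ i * x $ j))"
    using T by (intro sum.cong refl) (auto simp: kirchhoff_matrix_index subset_iff c_def power2_eq_square)
  also have "\<dots> = (\<Sum>i\<in>T. real (degree E (i + 1)) * x $ i ^ 2)
      - (\<Sum>i\<in>T. \<Sum>j\<in>T. if i = j then 0 else c i j * x $ i * x $ j)"
    using fin by (simp only: sum_subtractf sum.delta) simp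
  finally have quad: "x \<bullet> (kirchhoff_matrix n E *\<^sub>v x) = \<dots>" .
  have diag: "real d * (\<Sum>i\<in>T. x $ i ^ 2) \<le> (\<Sum>i\<in>T. real (degree E (i + 1)) * x $ i ^ 2)"
    unfolding sum_distrib_left using deg by (intro sum_mono mult_right_mono) auto
  have "0 \<le> c i j \<and> c i j \<le> 1" if "i \<in> T" "j \<in> T" "i \<noteq> j" for i j
  proof -
    have "i + 1 \<in> {1..n}" "j + 1 \<in> {1..n}" using T that(1,2) by auto
    then show ?thesis using nm that(3) unfolding no_multiple_connections_def c_def by auto
  qed
  then have "(\<Sum>i\<in>T. \<Sum>j\<in>T. if i = j then 0 else c i j * x $ i * x $ j)
      \<le> real (card T - 1) * (\<Sum>i\<in>T. x $ i ^ 2)"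
    by (rule off_diagonal_sum_le[OF fin])
  with diag show ?thesis unfolding quad xx left_diff_distrib by linarith
qed

lemma card_ge_sorted_nth:
  fixes xs :: "'a :: linorder list"
  assumes k: "k < length xs"
  shows "length xs - k \<le> card {i. i < length xs \<and> sort xs ! k \<le> xs ! i}"
proof -
  have "{k..<length xs} \<subseteq> {i. i < length xs \<and> sort xs ! k \<le> sort xs ! i}"
    by (auto intro: sorted_nth_mono)
  then have "length xs - k \<le> card {i. i < length xs \<and> sort xs ! k \<le> sort xs ! i}"
    using card_mono[of _ "{k..<length xs}"] by fastforce
  also have "\<dots> = length (filter (\<lambda>d. sort xs ! k \<le> d) (sort xs))"
    by (simp add: length_filter_conv_card)
  also have "\<dots> = length (filter (\<lambda>d. sort xs ! k \<le> d) xs)"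
    by (metis mset_filter mset_sort size_mset)
  also have "\<dots> = card {i. i < length xs \<and> sort xs ! k \<le> xs ! i}"
    by (simp add: length_filter_conv_card)
  finally show ?thesis .
qed

lemma large_degree_vertices:
  assumes k: "k < n"
  obtains T where "T \<subseteq> {0..<n}" "card T = n - k"
    "\<And>i. i \<in> T \<Longrightarrow> sorted_degrees n E ! k \<le> degree E (i + 1)"
proof -
  define ds where "ds = map (degree E) [1..<n + 1]"
  have ds: "length ds = n" "\<And>i. i < n \<Longrightarrow> ds ! i = degree E (i + 1)"
    unfolding ds_def by (auto simp del: upt_Suc)
  then have "n - k \<le> card {i. i < n \<and> sort ds ! k \<le> ds ! i}"
    using card_ge_sorted_nth[of k ds] k by auto
  then obtain T where "T \<subseteq> {i. i < n \<and> sort ds ! k \<le> ds ! i}" "card T = n - k"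
    by (meson obtain_subset_with_card_n)
  moreover have "sorted_degrees n E = sort ds" unfolding sorted_degrees_def ds_def ..
  ultimately show thesis using ds(2) by (intro that[of T]) auto
qed

theorem theorem2:
  fixes n :: nat and E :: "(nat \<times> nat) list" and lam :: "real list"
  assumes "n \<ge> 1"
    and "quiver n E"
    and "no_multiple_connections n E"
    and "eigenvalue_list (kirchhoff_matrix n E) lam"
  shows "\<forall>k \<in> {1..n}. lam ! (k - 1) \<ge> real (sorted_degrees n E ! (k - 1)) - real (n - k)"
proof
  fix k assume k: "k \<in> {1..n}"
  then have "k - 1 < n" by auto
  then obtain T where T: "T \<subseteq> {0..<n}" "card T = n - (k - 1)"
    and deg: "\<And>i. i \<in> T \<Longrightarrow> sorted_degrees n E ! (k - 1) \<le> degree E (i + 1)"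
    using large_degree_vertices[where E = E] by blast
  have "real (sorted_degrees n E ! (k - 1)) - real (card T - 1) \<le> lam ! (k - 1)"
  proof (rule courant_fischer_lower_bound[OF kirchhoff_matrix_carrier transpose_kirchhoff_matrix _ _ _ T])
    show "sorted lam" "char_poly (kirchhoff_matrix n E) = (\<Prod>a\<leftarrow>lam. [:- a, 1:])"
      using assms(4) unfolding eigenvalue_list_def by auto
    show "k - 1 < n" by fact
    show "(real (sorted_degrees n E ! (k - 1)) - real (card T - 1)) * (x \<bullet> x)
        \<le> x \<bullet> (kirchhoff_matrix n E *\<^sub>v x)"
      if "x \<in> carrier_vec n" "\<And>i. i < n \<Longrightarrow> i \<notin> T \<Longrightarrow> x $ i = 0" for x
      using assms(3) T(1) deg that by (rule kirchhoff_quadratic_form_ge)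
  qed
  moreover have "card T - 1 = n - k" using T(2) k by auto
  ultimately show "real (sorted_degrees n E ! (k - 1)) - real (n - k) \<le> lam ! (k - 1)" by simp
qed

end
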